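(* Let $k\ge 2$, let $H_0$ be a finite $k$-uniform hypergraph and let $(H_t)_{t\ge0}$ be the ILTH hypergraphs generated from $H_0$. Let $(a,b,c,d,e,f,g)$ be a 7-tuple of nonnegative integers and $t\ge 0$. If $H_t$ contains $x$ motifs with cardinality vector $(a,b,c,d,e,f,g)$, then $H_{t+1}$ contains at least $$x\big(g+(c+1)d+(b+1)f+(a+1)e+(a+1)(b+1)(c+1)\big)$$ motifs with cardinality vector $(a,b,c,d,e,f,g)$ (and hence of the same motif type).
   Context: A $k$-uniform hypergraph has every hyperedge a $k$-element subset of the vertex set. The ILTH process: given $H_t$, form $H_{t+1}$ by adding for each vertex $x\in V(H_t)$ a new vertex $x'$ (its clone), and taking $E(H_{t+1})=E(H_t)\cup\{(e\setminus\{x\})\cup\{x'\} : e\in E(H_t),\ x\in e\}$. A motif is given by three distinct hyperedges $e_1,e_2,e_3$ (ordered); its cardinality vector is $(|e_1\setminus(e_2\cup e_3)|,\ |e_2\setminus(e_1\cup e_3)|,\ |e_3\setminus(e_1\cup e_2)|,\ |(e_1\cap e_2)\setminus e_3|,\ |(e_2\cap e_3)\setminus e_1|,\ |(e_1\cap e_3)\setminus e_2|,\ |e_1\cap e_2\cap e_3|)$. Its motif type is the binary string recording which of these seven regions are nonempty, considered up to relabelling of $e_1,e_2,e_3$. *)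

theory Defs
  imports Main
begin

text \<open>Vertices of the ILTH hypergraphs: the vertices of H_0 are tagged Base,
  and the clone of vertex x created in step t (passing from H_t to H_(t+1)) is Cl t x,
  which is guaranteed to be a fresh vertex.\<close>
datatype 'a vtx = Base 'a | Cl nat "'a vtx"

type_synonym 'v hypergraph = "'v set \<times> 'v set set"

definition verts :: "'v hypergraph \<Rightarrow> 'v set" where "verts H = fst H"
definition hedges :: "'v hypergraph \<Rightarrow> 'v set set" where "hedges H = snd H"

definition k_uniform :: "nat \<Rightarrow> 'v hypergraph \<Rightarrow> bool" where
  "k_uniform k H \<longleftrightarrow> (\<forall>e\<in>hedges H. e \<subseteq> verts H \<and> card e = k)"

definition finite_hypergraph :: "'v hypergraph \<Rightarrow> bool" where
  "finite_hypergraph H \<longleftrightarrow> finite (verts H) \<and> finite (hedges H)"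

definition ilth_step :: "nat \<Rightarrow> 'a vtx hypergraph \<Rightarrow> 'a vtx hypergraph" where
  "ilth_step t H =
     (verts H \<union> Cl t ` verts H,
      hedges H \<union> {insert (Cl t x) (e - {x}) | e x. e \<in> hedges H \<and> x \<in> e})"

fun ilth :: "'a hypergraph \<Rightarrow> nat \<Rightarrow> 'a vtx hypergraph" where
  "ilth H0 0 = (Base ` verts H0, (\<lambda>e. Base ` e) ` hedges H0)"
| "ilth H0 (Suc t) = ilth_step t (ilth H0 t)"

definition card_vec :: "'v set \<Rightarrow> 'v set \<Rightarrow> 'v set \<Rightarrow> nat \<times> nat \<times> nat \<times> nat \<times> nat \<times> nat \<times> nat" where
  "card_vec e1 e2 e3 =
     (card (e1 - (e2 \<union> e3)), card (e2 - (e1 \<union> e3)), card (e3 - (e1 \<union> e2)),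
      card ((e1 \<inter> e2) - e3), card ((e2 \<inter> e3) - e1), card ((e1 \<inter> e3) - e2),
      card (e1 \<inter> e2 \<inter> e3))"

definition motifs :: "'v hypergraph \<Rightarrow> ('v set \<times> 'v set \<times> 'v set) set" where
  "motifs H = {(e1, e2, e3). e1 \<in> hedges H \<and> e2 \<in> hedges H \<and> e3 \<in> hedges H \<and>
                 e1 \<noteq> e2 \<and> e2 \<noteq> e3 \<and> e1 \<noteq> e3}"

definition motif_count :: "'v hypergraph \<Rightarrow> nat \<times> nat \<times> nat \<times> nat \<times> nat \<times> nat \<times> nat \<Rightarrow> nat" where
  "motif_count H cv = card {(e1, e2, e3) \<in> motifs H. card_vec e1 e2 e3 = cv}"

end

theory Submission
  imports Defs
begin

text \<open>Fix a motif (e1, e2, e3) of H_t and a set W of vertices meeting every e_i in at most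
  one vertex. Replacing each w \<in> W by its clone w' maps every e_i to a hyperedge of H_(t+1),
  namely e_i itself or (e_i - {w}) \<union> {w'}. The substitution is injective, so the cardinality
  vector is preserved, and since clones are fresh the motif and W can be read off the image.
  Sorting the admissible W by where their vertices lie (one vertex of the triple intersection:
  g choices; one vertex of (e1 \<inter> e2) - e3 and at most one private vertex of e3: d (c + 1);
  likewise f (b + 1) and e (a + 1); private vertices only: (a + 1) (b + 1) (c + 1)) yields the
  factor.\<close>

type_synonym 'v motif = "'v set \<times> 'v set \<times> 'v set"
type_synonym 'v clone_choice = "'v option \<times> 'v option \<times> 'v option"
type_synonym card_vector = "nat \<times> nat \<times> nat \<times> nat \<times> nat \<times> nat \<times> nat"

definition clone_map :: "nat \<Rightarrow> 'a vtx set \<Rightarrow> 'a vtx \<Rightarrow> 'a vtx" where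
  "clone_map t W u = (if u \<in> W then Cl t u else u)"

lemma inj_on_clone_map: "range (Cl t) \<inter> A = {} \<Longrightarrow> inj_on (clone_map t W) A"
  unfolding inj_on_def clone_map_def by auto

lemma clone_map_image_eq_iff:
  assumes "range (Cl t) \<inter> A = {}" and "range (Cl t) \<inter> B = {}"
  shows "clone_map t W ` A = clone_map t W' ` B \<longleftrightarrow> A = B \<and> W \<inter> A = W' \<inter> B"
proof -
  have recover:
    "A = {u \<in> clone_map t V ` A. u \<notin> range (Cl t)} \<union> {u. Cl t u \<in> clone_map t V ` A}"
    "V \<inter> A = {u. Cl t u \<in> clone_map t V ` A}" if "range (Cl t) \<inter> A = {}" for A V
    using that unfolding clone_map_def by (auto split: if_splits)
  show ?thesis
  proof
    assume "clone_map t W ` A = clone_map t W' ` B"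
    then show "A = B \<and> W \<inter> A = W' \<inter> B"
      using recover[OF assms(1), of W] recover[OF assms(2), of W'] by simp
  next
    assume "A = B \<and> W \<inter> A = W' \<inter> B"
    then show "clone_map t W ` A = clone_map t W' ` B"
      unfolding clone_map_def by (auto simp: image_iff)
  qed
qed

lemma clone_map_image_in_ilth_step:
  assumes "e \<in> hedges H" and "W \<inter> e = set_option q"
  shows "clone_map t W ` e \<in> hedges (ilth_step t H)"
proof (cases q)
  case None
  then have "clone_map t W ` e = e"
    using assms(2) unfolding clone_map_def by (auto simp: image_iff)
  then show ?thesis using assms(1) by (simp add: ilth_step_def hedges_def)
next
  case (Some v)
  then have "clone_map t W ` e = insert (Cl t v) (e - {v})" "v \<in> e"
    using assms(2) unfolding clone_map_def by (auto simp: image_iff)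
  then show ?thesis using assms(1) by (auto simp: ilth_step_def hedges_def)
qed

lemma card_vec_image:
  assumes "inj_on h (e1 \<union> e2 \<union> e3)"
  shows "card_vec (h ` e1) (h ` e2) (h ` e3) = card_vec e1 e2 e3"
proof -
  have card_eq: "card (h ` X) = card X" if "X \<subseteq> e1 \<union> e2 \<union> e3" for X
    using card_image inj_on_subset assms that by blast
  have regions: "h ` e1 - (h ` e2 \<union> h ` e3) = h ` (e1 - (e2 \<union> e3))"
    "h ` e2 - (h ` e1 \<union> h ` e3) = h ` (e2 - (e1 \<union> e3))"
    "h ` e3 - (h ` e1 \<union> h ` e2) = h ` (e3 - (e1 \<union> e2))"
    "h ` e1 \<inter> h ` e2 - h ` e3 = h ` (e1 \<inter> e2 - e3)"
    "h ` e2 \<inter> h ` e3 - h ` e1 = h ` (e2 \<inter> e3 - e1)"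
    "h ` e1 \<inter> h ` e3 - h ` e2 = h ` (e1 \<inter> e3 - e2)"
    "h ` e1 \<inter> h ` e2 \<inter> h ` e3 = h ` (e1 \<inter> e2 \<inter> e3)"
    using assms unfolding inj_on_def by blast+
  show ?thesis unfolding card_vec_def regions by (subst card_eq, blast)+ simp
qed

definition with_none :: "'v set \<Rightarrow> 'v option set" where
  "with_none A = insert None (Some ` A)"

lemma finite_with_none: "finite A \<Longrightarrow> finite (with_none A)"
  unfolding with_none_def by simp

lemma card_with_none: "finite A \<Longrightarrow> card (with_none A) = card A + 1"
  unfolding with_none_def by (simp add: card_image)

text \<open>A choice (q1, q2, q3) names the vertex of e_i to be cloned, if any.\<close>

fun clone_choices :: "'v motif \<Rightarrow> 'v clone_choice set" where
  "clone_choices (e1, e2, e3) =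
     (\<lambda>v. (Some v, Some v, Some v)) ` (e1 \<inter> e2 \<inter> e3) \<union>
     (\<lambda>(v, q). (Some v, Some v, q)) ` ((e1 \<inter> e2 - e3) \<times> with_none (e3 - (e1 \<union> e2))) \<union>
     (\<lambda>(v, q). (Some v, q, Some v)) ` ((e1 \<inter> e3 - e2) \<times> with_none (e2 - (e1 \<union> e3))) \<union>
     (\<lambda>(v, q). (q, Some v, Some v)) ` ((e2 \<inter> e3 - e1) \<times> with_none (e1 - (e2 \<union> e3))) \<union>
     with_none (e1 - (e2 \<union> e3)) \<times> with_none (e2 - (e1 \<union> e3)) \<times> with_none (e3 - (e1 \<union> e2))"

declare clone_choices.simps [simp del]

fun chosen_vertices :: "'v clone_choice \<Rightarrow> 'v set" where
  "chosen_vertices (q1, q2, q3) = set_option q1 \<union> set_option q2 \<union> set_option q3"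

lemma chosen_vertices_Int:
  assumes "(q1, q2, q3) \<in> clone_choices (e1, e2, e3)"
  shows "chosen_vertices (q1, q2, q3) \<inter> e1 = set_option q1"
    and "chosen_vertices (q1, q2, q3) \<inter> e2 = set_option q2"
    and "chosen_vertices (q1, q2, q3) \<inter> e3 = set_option q3"
  using assms by (auto simp: clone_choices.simps with_none_def)

definition motif_multiplier :: "card_vector \<Rightarrow> nat" where
  "motif_multiplier cv = (case cv of (a, b, c, d, e, f, g) \<Rightarrow>
     g + (c + 1) * d + (b + 1) * f + (a + 1) * e + (a + 1) * (b + 1) * (c + 1))"

lemma finite_clone_choices:
  "finite e1 \<Longrightarrow> finite e2 \<Longrightarrow> finite e3 \<Longrightarrow> finite (clone_choices (e1, e2, e3))"
  by (simp add: clone_choices.simps finite_with_none)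

lemma card_clone_choices:
  assumes "finite e1" and "finite e2" and "finite e3"
  shows "card (clone_choices (e1, e2, e3)) = motif_multiplier (card_vec e1 e2 e3)"
proof -
  define G where "G = (\<lambda>v. (Some v, Some v, Some v)) ` (e1 \<inter> e2 \<inter> e3)"
  define D where
    "D = (\<lambda>(v, q). (Some v, Some v, q)) ` ((e1 \<inter> e2 - e3) \<times> with_none (e3 - (e1 \<union> e2)))"
  define F where
    "F = (\<lambda>(v, q). (Some v, q, Some v)) ` ((e1 \<inter> e3 - e2) \<times> with_none (e2 - (e1 \<union> e3)))"
  define E where
    "E = (\<lambda>(v, q). (q, Some v, Some v)) ` ((e2 \<inter> e3 - e1) \<times> with_none (e1 - (e2 \<union> e3)))"
  define P where
    "P = with_none (e1 - (e2 \<union> e3)) \<times> with_none (e2 - (e1 \<union> e3)) \<times> with_none (e3 - (e1 \<union> e2))"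
  have finite: "finite G" "finite D" "finite F" "finite E" "finite P"
    unfolding G_def D_def F_def E_def P_def using assms by (auto intro!: finite_with_none)
  have disjoint: "G \<inter> D = {}" "(G \<union> D) \<inter> F = {}" "(G \<union> D \<union> F) \<inter> E = {}"
    "(G \<union> D \<union> F \<union> E) \<inter> P = {}"
    unfolding G_def D_def F_def E_def P_def with_none_def by auto
  have "card (clone_choices (e1, e2, e3)) = card G + card D + card F + card E + card P"
    unfolding clone_choices.simps G_def[symmetric] D_def[symmetric] F_def[symmetric]
      E_def[symmetric] P_def[symmetric]
    using finite disjoint by (simp add: card_Un_disjoint)
  moreover have "card G = card (e1 \<inter> e2 \<inter> e3)"
    unfolding G_def by (rule card_image) (auto simp: inj_on_def)
  moreover have "card D = card (e1 \<inter> e2 - e3) * (card (e3 - (e1 \<union> e2)) + 1)"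
    "card F = card (e1 \<inter> e3 - e2) * (card (e2 - (e1 \<union> e3)) + 1)"
    "card E = card (e2 \<inter> e3 - e1) * (card (e1 - (e2 \<union> e3)) + 1)"
    unfolding D_def F_def E_def
    by (subst card_image; auto simp: inj_on_def card_cartesian_product card_with_none assms)+
  moreover have "card P = (card (e1 - (e2 \<union> e3)) + 1) * (card (e2 - (e1 \<union> e3)) + 1)
      * (card (e3 - (e1 \<union> e2)) + 1)"
    unfolding P_def by (simp add: card_cartesian_product card_with_none assms algebra_simps)
  ultimately show ?thesis unfolding motif_multiplier_def card_vec_def by (simp add: algebra_simps)
qed

definition motifs_with :: "'v hypergraph \<Rightarrow> card_vector \<Rightarrow> 'v motif set" where
  "motifs_with H cv = {(e1, e2, e3) \<in> motifs H. card_vec e1 e2 e3 = cv}"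

lemma motif_count_eq_card_motifs_with: "motif_count H cv = card (motifs_with H cv)"
  by (simp add: motif_count_def motifs_with_def)

lemma finite_motifs_with: "finite (hedges H) \<Longrightarrow> finite (motifs_with H cv)"
  by (rule finite_subset[of _ "hedges H \<times> hedges H \<times> hedges H"])
    (auto simp: motifs_with_def motifs_def)

fun cloned_motif :: "nat \<Rightarrow> 'a vtx motif \<Rightarrow> 'a vtx clone_choice \<Rightarrow> 'a vtx motif" where
  "cloned_motif t (e1, e2, e3) q =
     (let W = chosen_vertices q in (clone_map t W ` e1, clone_map t W ` e2, clone_map t W ` e3))"

lemma cloned_motif_in_motifs_with:
  assumes m: "m \<in> motifs_with H cv"
    and fresh: "\<forall>e\<in>hedges H. range (Cl t) \<inter> e = {}"
    and q: "q \<in> clone_choices m"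
  shows "cloned_motif t m q \<in> motifs_with (ilth_step t H) cv"
proof -
  obtain e1 e2 e3 where m_eq: "m = (e1, e2, e3)" by (cases m)
  obtain q1 q2 q3 where q_eq: "q = (q1, q2, q3)" by (cases q)
  define W where "W = chosen_vertices q"
  have edges: "e1 \<in> hedges H" "e2 \<in> hedges H" "e3 \<in> hedges H"
    and distinct: "e1 \<noteq> e2" "e2 \<noteq> e3" "e1 \<noteq> e3"
    and cv: "card_vec e1 e2 e3 = cv"
    using m by (auto simp: motifs_with_def motifs_def m_eq)
  have inj: "inj_on (clone_map t W) (e1 \<union> e2 \<union> e3)"
    using fresh edges by (intro inj_on_clone_map) blast
  have "clone_map t W ` e1 \<in> hedges (ilth_step t H)"
    "clone_map t W ` e2 \<in> hedges (ilth_step t H)" "clone_map t W ` e3 \<in> hedges (ilth_step t H)"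
    using chosen_vertices_Int[OF q[unfolded q_eq m_eq]] edges
    by (auto simp: W_def q_eq intro: clone_map_image_in_ilth_step)
  moreover have "clone_map t W ` e1 \<noteq> clone_map t W ` e2"
    "clone_map t W ` e2 \<noteq> clone_map t W ` e3" "clone_map t W ` e1 \<noteq> clone_map t W ` e3"
    using inj_on_image_eq_iff[OF inj] distinct by auto
  ultimately show ?thesis
    using card_vec_image[OF inj] cv by (simp add: motifs_with_def motifs_def W_def Let_def m_eq)
qed

lemma set_option_inject: "set_option p = set_option q \<longleftrightarrow> p = q"
  by (cases p; cases q) auto

lemma inj_on_cloned_motif:
  assumes fresh: "\<forall>e\<in>hedges H. range (Cl t) \<inter> e = {}"
  shows "inj_on (\<lambda>(m, q). cloned_motif t m q) (SIGMA m:motifs H. clone_choices m)"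
proof (rule inj_onI, clarsimp simp del: clone_choices.simps cloned_motif.simps)
  fix e1 e2 e3 q1 q2 q3 e1' e2' e3' q1' q2' q3'
  assume m: "(e1, e2, e3) \<in> motifs H" and q: "(q1, q2, q3) \<in> clone_choices (e1, e2, e3)"
    and m': "(e1', e2', e3') \<in> motifs H" and q': "(q1', q2', q3') \<in> clone_choices (e1', e2', e3')"
    and eq: "cloned_motif t (e1, e2, e3) (q1, q2, q3)
      = cloned_motif t (e1', e2', e3') (q1', q2', q3')"
  define W where "W = chosen_vertices (q1, q2, q3)"
  define W' where "W' = chosen_vertices (q1', q2', q3')"
  have images: "clone_map t W ` e1 = clone_map t W' ` e1'"
    "clone_map t W ` e2 = clone_map t W' ` e2'" "clone_map t W ` e3 = clone_map t W' ` e3'"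
    using eq by (simp_all add: W_def W'_def Let_def)
  have recover: "A = B \<and> W \<inter> A = W' \<inter> B"
    if "clone_map t W ` A = clone_map t W' ` B" "A \<in> hedges H" "B \<in> hedges H" for A B
    by (rule clone_map_image_eq_iff[THEN iffD1]) (use fresh that in auto)
  have same: "e1 = e1' \<and> W \<inter> e1 = W' \<inter> e1'" "e2 = e2' \<and> W \<inter> e2 = W' \<inter> e2'"
    "e3 = e3' \<and> W \<inter> e3 = W' \<inter> e3'"
    using recover images m m' unfolding motifs_def by blast+
  then have "set_option q1 = set_option q1'" "set_option q2 = set_option q2'"
    "set_option q3 = set_option q3'"
    using chosen_vertices_Int[OF q] chosen_vertices_Int[OF q'] unfolding W_def W'_def by metis+
  with same show "e1 = e1' \<and> e2 = e2' \<and> e3 = e3' \<and> q1 = q1' \<and> q2 = q2' \<and> q3 = q3'"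
    by (simp add: set_option_inject)
qed

lemma finite_hedges_ilth_step:
  assumes "finite (hedges H)" and "\<forall>e\<in>hedges H. finite e"
  shows "finite (hedges (ilth_step t H))"
proof -
  have "{insert (Cl t x) (e - {x}) | e x. e \<in> hedges H \<and> x \<in> e}
      = (\<lambda>(e, x). insert (Cl t x) (e - {x})) ` (SIGMA e:hedges H. e)"
    by auto
  then show ?thesis using assms by (simp add: ilth_step_def hedges_def)
qed

lemma motif_count_ilth_step:
  assumes finite: "finite (hedges H)" and finite_edges: "\<forall>e\<in>hedges H. finite e"
    and fresh: "\<forall>e\<in>hedges H. range (Cl t) \<inter> e = {}"
  shows "motif_count H cv * motif_multiplier cv \<le> motif_count (ilth_step t H) cv"
proof -
  let ?S = "SIGMA m:motifs_with H cv. clone_choices m"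
  have "card (clone_choices m) = motif_multiplier cv" "finite (clone_choices m)"
    if "m \<in> motifs_with H cv" for m
    using that finite_edges
    by (cases m, auto simp: motifs_with_def motifs_def card_clone_choices finite_clone_choices)+
  then have "motif_count H cv * motif_multiplier cv = card ?S"
    using finite_motifs_with[OF finite]
    by (simp add: card_SigmaI motif_count_eq_card_motifs_with)
  also have "\<dots> = card ((\<lambda>(m, q). cloned_motif t m q) ` ?S)"
    by (rule card_image[symmetric], rule inj_on_subset[OF inj_on_cloned_motif[OF fresh]])
      (auto simp: motifs_with_def)
  also have "\<dots> \<le> card (motifs_with (ilth_step t H) cv)"
    using cloned_motif_in_motifs_with[OF _ fresh, where cv = cv]
    by (intro card_mono finite_motifs_with finite_hedges_ilth_step finite finite_edges) auto
  finally show ?thesis by (simp add: motif_count_eq_card_motifs_with)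
qed

lemma finite_ilth:
  assumes "finite (hedges H0)" and "\<forall>e\<in>hedges H0. finite e"
  shows "finite (hedges (ilth H0 t)) \<and> (\<forall>e\<in>hedges (ilth H0 t). finite e)"
  using assms
  by (induction t) (auto simp: finite_hedges_ilth_step, auto simp: ilth_step_def hedges_def)

lemma ilth_clones_fresh: "e \<in> hedges (ilth H0 t) \<Longrightarrow> t \<le> s \<Longrightarrow> Cl s w \<notin> e"
  by (induction t arbitrary: e) (auto simp: ilth_step_def hedges_def)

theorem lemma3p2:
  fixes k :: nat and H0 :: "'a hypergraph"
    and a b c d e f g t x :: nat
  assumes "k \<ge> 2"
    and "finite_hypergraph H0"
    and "k_uniform k H0"
    and "motif_count (ilth H0 t) (a, b, c, d, e, f, g) = x"
  shows "motif_count (ilth H0 (Suc t)) (a, b, c, d, e, f, g)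
           \<ge> x * (g + (c + 1) * d + (b + 1) * f + (a + 1) * e + (a + 1) * (b + 1) * (c + 1))"
proof -
  txt \<open>The hypothesis k \<ge> 2 only serves to make hyperedges finite.\<close>
  have "\<forall>e\<in>hedges H0. finite e"
    using assms(1,3) unfolding k_uniform_def by (metis card.infinite not_numeral_le_zero)
  then have "finite (hedges (ilth H0 t))" "\<forall>e\<in>hedges (ilth H0 t). finite e"
    using finite_ilth assms(2) unfolding finite_hypergraph_def by blast+
  moreover have "\<forall>e\<in>hedges (ilth H0 t). range (Cl t) \<inter> e = {}"
    using ilth_clones_fresh by blast
  ultimately show ?thesis
    using motif_count_ilth_step[of "ilth H0 t" t "(a, b, c, d, e, f, g)"] assms(4)
    by (simp add: motif_multiplier_def)
qed

end
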